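(* Let $G$ be a finite graph, $D$ a divisor on $G$, and $f \in R(G,D)$. Then $f$ is an extremal of $R(G,D)$ if and only if there do not exist two proper subsets $V_1, V_2 \subsetneq V(G)$ with $V_1\cup V_2=V(G)$ such that each of $V_1$ and $V_2$ can fire on $D+\mathrm{div}(f)$.
   Context: A finite graph $G$ is connected, with finitely many vertices $V(G)$ and edges $E(G)$, loops and multiple edges allowed. A divisor on $G$ is a formal sum $D=\sum_{x\in V(G)}D(x)[x]$, $D(x)\in{\mathbb{Z}}$; effective if all $D(x)\ge0$. A rational function is $f:V(G)\to{\mathbb{Z}}$; $\mathrm{ord}_x(f)=\sum_{e=\overline{xy}\in E(G)}(f(y)-f(x))$ and $\mathrm{div}(f)=\sum_x\mathrm{ord}_x(f)[x]$. $R(G,D)=\{f: D+\mathrm{div}(f)\ge0\}$. An extremal of $R(G,D)$ is $f\in R(G,D)$ such that $f=\max(g,h)$ with $g,h\in R(G,D)$ implies $f=g$ or $f=h$. For $V'\subseteq V(G)$, $\mathrm{CF}(V')$ is the function equal to $0$ on $V'$ and $-1$ off $V'$; $V'$ can fire on a divisor $E$ if $E+\mathrm{div}(\mathrm{CF}(V'))$ is effective. *)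

theory Defs
  imports Main
begin

text \<open>A finite multigraph (loops and multiple edges allowed): vertex set V, edge set E,
  and each edge e has endpoints ends e = (u, v).\<close>

definition multigraph :: "'v set \<Rightarrow> 'e set \<Rightarrow> ('e \<Rightarrow> 'v \<times> 'v) \<Rightarrow> bool" where
  "multigraph V E ends \<longleftrightarrow> finite V \<and> finite E \<and>
     (\<forall>e\<in>E. fst (ends e) \<in> V \<and> snd (ends e) \<in> V)"

definition adj :: "'e set \<Rightarrow> ('e \<Rightarrow> 'v \<times> 'v) \<Rightarrow> ('v \<times> 'v) set" where
  "adj E ends = {(u, v). \<exists>e\<in>E. ends e = (u, v) \<or> ends e = (v, u)}"

definition connected_graph :: "'v set \<Rightarrow> 'e set \<Rightarrow> ('e \<Rightarrow> 'v \<times> 'v) \<Rightarrow> bool" where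
  "connected_graph V E ends \<longleftrightarrow> multigraph V E ends \<and> V \<noteq> {} \<and>
     (\<forall>x\<in>V. \<forall>y\<in>V. (x, y) \<in> (adj E ends)\<^sup>*)"

definition ord_at :: "'e set \<Rightarrow> ('e \<Rightarrow> 'v \<times> 'v) \<Rightarrow> ('v \<Rightarrow> int) \<Rightarrow> 'v \<Rightarrow> int" where
  "ord_at E ends f x =
     (\<Sum>e\<in>{e\<in>E. fst (ends e) = x}. f (snd (ends e)) - f x) +
     (\<Sum>e\<in>{e\<in>E. snd (ends e) = x}. f (fst (ends e)) - f x)"

text \<open>Divisors are functions V \<rightarrow> int (values off V irrelevant).\<close>
definition div_fun :: "'e set \<Rightarrow> ('e \<Rightarrow> 'v \<times> 'v) \<Rightarrow> ('v \<Rightarrow> int) \<Rightarrow> 'v \<Rightarrow> int" where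
  "div_fun E ends f = (\<lambda>x. ord_at E ends f x)"

definition effective :: "'v set \<Rightarrow> ('v \<Rightarrow> int) \<Rightarrow> bool" where
  "effective V D \<longleftrightarrow> (\<forall>x\<in>V. D x \<ge> 0)"

text \<open>Rational functions f : V \<rightarrow> int, represented extensionally (0 off V).\<close>
definition R_space :: "'v set \<Rightarrow> 'e set \<Rightarrow> ('e \<Rightarrow> 'v \<times> 'v) \<Rightarrow> ('v \<Rightarrow> int) \<Rightarrow> ('v \<Rightarrow> int) set" where
  "R_space V E ends D = {f. (\<forall>x. x \<notin> V \<longrightarrow> f x = 0) \<and>
      effective V (\<lambda>x. D x + div_fun E ends f x)}"

definition extremal :: "('v \<Rightarrow> int) set \<Rightarrow> ('v \<Rightarrow> int) \<Rightarrow> bool" where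
  "extremal S f \<longleftrightarrow> f \<in> S \<and>
     (\<forall>g\<in>S. \<forall>h\<in>S. f = (\<lambda>x. max (g x) (h x)) \<longrightarrow> f = g \<or> f = h)"

definition CF :: "'v set \<Rightarrow> 'v set \<Rightarrow> 'v \<Rightarrow> int" where
  "CF V V' = (\<lambda>x. if x \<in> V' then 0 else if x \<in> V then -1 else 0)"

definition can_fire :: "'v set \<Rightarrow> 'e set \<Rightarrow> ('e \<Rightarrow> 'v \<times> 'v) \<Rightarrow> 'v set \<Rightarrow> ('v \<Rightarrow> int) \<Rightarrow> bool" where
  "can_fire V E ends V' D' \<longleftrightarrow> effective V (\<lambda>x. D' x + div_fun E ends (CF V V') x)"

end

theory Submission
  imports Defs
begin

text \<open>Firing a proper subset W lowers f by one off W, and W can fire on D + div f exactly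
  when f + CF(W) stays in R(G, D).  So two firing sets covering V exhibit f as the maximum of
  two smaller members of R(G, D).  Conversely, if f = max g h, the set where g agrees with f can
  fire: at a vertex x of it, firing changes every difference f y - f x by at most as much as
  passing from f to g does, so ord_x only grows relative to g.  The agreement sets of g and h
  cover V and are proper unless f = g or f = h.\<close>

lemma ord_at_add:
  "ord_at E ends (\<lambda>x. f x + g x) x = ord_at E ends f x + ord_at E ends g x"
  unfolding ord_at_def by (simp add: sum.distrib[symmetric] algebra_simps)

lemma ord_at_mono:
  assumes "multigraph V E ends" and "\<And>y. y \<in> V \<Longrightarrow> g y - g x \<le> F y - F x"
  shows "ord_at E ends g x \<le> ord_at E ends F x"
proof -
  have ends_in_V: "\<And>e. e \<in> E \<Longrightarrow> fst (ends e) \<in> V \<and> snd (ends e) \<in> V"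
    using assms(1) unfolding multigraph_def by blast
  have "(\<Sum>e\<in>{e\<in>E. fst (ends e) = x}. g (snd (ends e)) - g x)
      \<le> (\<Sum>e\<in>{e\<in>E. fst (ends e) = x}. F (snd (ends e)) - F x)"
    by (rule sum_mono) (use ends_in_V assms(2) in auto)
  moreover have "(\<Sum>e\<in>{e\<in>E. snd (ends e) = x}. g (fst (ends e)) - g x)
      \<le> (\<Sum>e\<in>{e\<in>E. snd (ends e) = x}. F (fst (ends e)) - F x)"
    by (rule sum_mono) (use ends_in_V assms(2) in auto)
  ultimately show ?thesis unfolding ord_at_def by linarith
qed

lemma can_fire_iff_fired_in_R_space:
  assumes "f \<in> R_space V E ends D"
  shows "can_fire V E ends W (\<lambda>x. D x + div_fun E ends f x) \<longleftrightarrow>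
    (\<lambda>x. f x + CF V W x) \<in> R_space V E ends D"
  using assms
  by (auto simp: R_space_def can_fire_def effective_def div_fun_def ord_at_add CF_def
      algebra_simps)

lemma fired_ne_self:
  assumes "W \<subset> V"
  shows "(\<lambda>x. f x + CF V W x) \<noteq> f"
proof -
  obtain a where "a \<in> V" "a \<notin> W" using assms by blast
  then have "f a + CF V W a \<noteq> f a" by (simp add: CF_def)
  then show ?thesis by metis
qed

lemma agreement_set_subset:
  assumes "f \<in> R_space V E ends D" and "k \<in> R_space V E ends D" and "k \<noteq> f"
  shows "{x\<in>V. k x = f x} \<subset> V"
proof -
  obtain a where a: "k a \<noteq> f a" using assms(3) by blast
  with assms(1,2) have "a \<in> V" unfolding R_space_def by force
  with a show ?thesis by blast
qed

lemma agreement_set_can_fire: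
  assumes "multigraph V E ends"
    and f: "f \<in> R_space V E ends D" and k: "k \<in> R_space V E ends D"
    and below: "\<And>x. x \<in> V \<Longrightarrow> k x \<le> f x"
  shows "can_fire V E ends {x\<in>V. k x = f x} (\<lambda>x. D x + div_fun E ends f x)"
proof -
  define W where "W = {x\<in>V. k x = f x}"
  define F where "F = (\<lambda>x. f x + CF V W x)"
  have f_eff: "\<And>x. x \<in> V \<Longrightarrow> 0 \<le> D x + ord_at E ends f x"
    and k_eff: "\<And>x. x \<in> V \<Longrightarrow> 0 \<le> D x + ord_at E ends k x"
    using f k by (auto simp: R_space_def effective_def div_fun_def)
  have "0 \<le> D x + ord_at E ends F x" if x: "x \<in> V" for x
  proof (cases "x \<in> W")
    case True
    have "k y - k x \<le> F y - F x" if "y \<in> V" for y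
    proof (cases "y \<in> W")
      case False
      with \<open>y \<in> V\<close> below have "k y < f y" by (force simp: W_def)
      with True False \<open>y \<in> V\<close> show ?thesis by (simp add: F_def CF_def W_def)
    qed (use True in \<open>simp add: F_def CF_def W_def\<close>)
    then have "ord_at E ends k x \<le> ord_at E ends F x"
      by (rule ord_at_mono[OF assms(1)])
    with k_eff[OF x] show ?thesis by linarith
  next
    case False
    have "ord_at E ends f x \<le> ord_at E ends F x"
      by (rule ord_at_mono[OF assms(1)]) (use False x in \<open>auto simp: F_def CF_def\<close>)
    with f_eff[OF x] show ?thesis by linarith
  qed
  with f have "F \<in> R_space V E ends D"
    by (auto simp: R_space_def effective_def div_fun_def F_def CF_def)
  with f show ?thesis
    unfolding W_def F_def by (simp add: can_fire_iff_fired_in_R_space)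
qed

theorem lemma3p3:
  fixes V :: "'v set" and E :: "'e set" and ends :: "'e \<Rightarrow> 'v \<times> 'v"
    and D :: "'v \<Rightarrow> int" and f :: "'v \<Rightarrow> int"
  assumes "connected_graph V E ends"
    and "f \<in> R_space V E ends D"
  shows "extremal (R_space V E ends D) f \<longleftrightarrow>
    \<not> (\<exists>V1 V2. V1 \<subset> V \<and> V2 \<subset> V \<and> V1 \<union> V2 = V \<and>
          can_fire V E ends V1 (\<lambda>x. D x + div_fun E ends f x) \<and>
          can_fire V E ends V2 (\<lambda>x. D x + div_fun E ends f x))"
proof
  assume ext: "extremal (R_space V E ends D) f"
  show "\<not> (\<exists>V1 V2. V1 \<subset> V \<and> V2 \<subset> V \<and> V1 \<union> V2 = V \<and>
          can_fire V E ends V1 (\<lambda>x. D x + div_fun E ends f x) \<and>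
          can_fire V E ends V2 (\<lambda>x. D x + div_fun E ends f x))"
  proof (intro notI, elim exE conjE)
    fix V1 V2
    assume "V1 \<subset> V" "V2 \<subset> V" and cover: "V1 \<union> V2 = V"
      and "can_fire V E ends V1 (\<lambda>x. D x + div_fun E ends f x)"
      and "can_fire V E ends V2 (\<lambda>x. D x + div_fun E ends f x)"
    then have "(\<lambda>x. f x + CF V V1 x) \<in> R_space V E ends D"
      and "(\<lambda>x. f x + CF V V2 x) \<in> R_space V E ends D"
      and "(\<lambda>x. f x + CF V V1 x) \<noteq> f" and "(\<lambda>x. f x + CF V V2 x) \<noteq> f"
      by (simp_all add: can_fire_iff_fired_in_R_space[OF assms(2)] fired_ne_self)
    moreover have "f = (\<lambda>x. max (f x + CF V V1 x) (f x + CF V V2 x))"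
      using cover by (auto simp: CF_def)
    ultimately show False
      using ext unfolding extremal_def
      by (elim conjE ballE[of _ _ "\<lambda>x. f x + CF V V1 x"] ballE[of _ _ "\<lambda>x. f x + CF V V2 x"])
        simp_all
  qed
next
  assume no_cover: "\<not> (\<exists>V1 V2. V1 \<subset> V \<and> V2 \<subset> V \<and> V1 \<union> V2 = V \<and>
          can_fire V E ends V1 (\<lambda>x. D x + div_fun E ends f x) \<and>
          can_fire V E ends V2 (\<lambda>x. D x + div_fun E ends f x))"
  have mg: "multigraph V E ends" using assms(1) by (simp add: connected_graph_def)
  have "f = g \<or> f = h"
    if g: "g \<in> R_space V E ends D" and h: "h \<in> R_space V E ends D"
      and max: "f = (\<lambda>x. max (g x) (h x))" for g h
  proof (rule ccontr)
    assume "\<not> (f = g \<or> f = h)"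
    then have "{x\<in>V. g x = f x} \<subset> V" and "{x\<in>V. h x = f x} \<subset> V"
      using agreement_set_subset[OF assms(2)] g h by auto
    moreover have "can_fire V E ends {x\<in>V. g x = f x} (\<lambda>x. D x + div_fun E ends f x)"
      and "can_fire V E ends {x\<in>V. h x = f x} (\<lambda>x. D x + div_fun E ends f x)"
      using agreement_set_can_fire[OF mg assms(2)] g h max by auto
    moreover have "{x\<in>V. g x = f x} \<union> {x\<in>V. h x = f x} = V"
      using max by (auto simp: max_def)
    ultimately show False using no_cover by blast
  qed
  with assms(2) show "extremal (R_space V E ends D) f" by (simp add: extremal_def)
qed

end
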